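(* Let $\widehat{\mathcal T}_\bullet$ be an arbitrary hierarchical mesh. Then $\Pi_\bullet(\widehat T)\subseteq\mathcal N_\bullet(\widehat T)$ for all $\widehat T\in\widehat{\mathcal T}_\bullet$, where $\Pi_\bullet(\widehat T)=\{\widehat T'\in\widehat{\mathcal T}_\bullet:\widehat T'\cap\widehat T\ne\emptyset\}$.
   Context: Parameter domain $\widehat\Omega=(0,1)^d$, $d\ge2$; degrees $p_1,\dots,p_d\ge1$. For each $i$, $\widehat{\mathcal K}^0_i$ is a $p_i$-open knot vector in $[0,1]$ (first $p_i+1$ knots $0$, last $p_i+1$ knots $1$, interior multiplicities $\le p_i$); $\widehat{\mathcal K}^{k+1}_i$ arises from $\widehat{\mathcal K}^k_i$ by inserting each nondegenerate span's midpoint once. $\widehat{\mathcal B}^k$: tensor-product B-splines of degree $(p_1,\dots,p_d)$ for $\widehat{\mathcal K}^k$; $\widehat{\mathcal T}^k$: closed cells of level $k$. A hierarchical mesh is given by closed sets $[0,1]^d=\widehat\Omega^0_\bullet\supseteq\widehat\Omega^1_\bullet\supseteq\cdots$, each $\widehat\Omega^k_\bullet$ ($k\ge1$) a union of cells of $\widehat{\mathcal T}^{k-1}$, eventually empty; mesh $\widehat{\mathcal T}_\bullet=\bigcup_k\{\widehat T\in\widehat{\mathcal T}^k:\widehat T\subseteq\widehat\Omega^k_\bullet,\widehat T\not\subseteq\widehat\Omega^{k+1}_\bullet\}$; hierarchical basis $\widehat{\mathcal H}_\bullet=\bigcup_k\{\widehat\beta\in\widehat{\mathcal B}^k:{\rm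 supp}\,\widehat\beta\subseteq\widehat\Omega^k_\bullet,{\rm supp}\,\widehat\beta\not\subseteq\widehat\Omega^{k+1}_\bullet\}$. Neighbors $\mathcal N_\bullet(\widehat T)=\{\widehat T'\in\widehat{\mathcal T}_\bullet:\exists\widehat\beta\in\widehat{\mathcal H}_\bullet,\ \widehat T,\widehat T'\subseteq{\rm supp}\,\widehat\beta\}$. *)

theory Defs
  imports "HOL-Analysis.Analysis"
begin

definition open_knot_vector :: "nat \<Rightarrow> real list \<Rightarrow> bool" where
  "open_knot_vector p t \<longleftrightarrow>
     sorted t \<and> set t \<subseteq> {0..1} \<and>
     count_list t 0 = p + 1 \<and> count_list t 1 = p + 1 \<and>
     (\<forall>x\<in>{0<..<1}. count_list t x \<le> p)"

definition refine_knots :: "real list \<Rightarrow> real list" where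
  "refine_knots t =
     sort (t @ map (\<lambda>(a, b). (a + b) / 2) (filter (\<lambda>(a, b). a < b) (zip t (tl t))))"

text \<open>Cox--de Boor recursion (with the convention 0/0 = 0, built into HOL's division).
  bspl t p j is the j-th B-spline of degree p for the knot vector t.\<close>
fun bspl :: "real list \<Rightarrow> nat \<Rightarrow> nat \<Rightarrow> real \<Rightarrow> real" where
  "bspl t 0 j x = (if t ! j \<le> x \<and> x < t ! (j + 1) then 1 else 0)"
| "bspl t (Suc q) j x =
     (x - t ! j) / (t ! (j + q + 1) - t ! j) * bspl t q j x
   + (t ! (j + q + 2) - x) / (t ! (j + q + 2) - t ! (j + 1)) * bspl t q (j + 1) x"

definition knots :: "('n \<Rightarrow> real list) \<Rightarrow> nat \<Rightarrow> 'n \<Rightarrow> real list" where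
  "knots K0 k i = (refine_knots ^^ k) (K0 i)"

definition bsplines :: "('n::finite \<Rightarrow> nat) \<Rightarrow> ('n \<Rightarrow> real list) \<Rightarrow> nat
     \<Rightarrow> (real^'n \<Rightarrow> real) set" where
  "bsplines p K0 k =
     {\<beta>. \<exists>j :: 'n \<Rightarrow> nat. (\<forall>i. j i + p i + 1 < length (knots K0 k i)) \<and>
          \<beta> = (\<lambda>x. \<Prod>i\<in>UNIV. bspl (knots K0 k i) (p i) (j i) (x $ i))}"

definition supp :: "(real^'n \<Rightarrow> real) \<Rightarrow> (real^'n) set" where
  "supp f = closure {x. f x \<noteq> 0}"

definition cells :: "('n::finite \<Rightarrow> real list) \<Rightarrow> nat \<Rightarrow> (real^'n) set set" where
  "cells K0 k =
     {cbox a b | a b. \<forall>i. \<exists>m. m + 1 < length (knots K0 k i) \<and>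
          a $ i = knots K0 k i ! m \<and> b $ i = knots K0 k i ! (m + 1) \<and> a $ i < b $ i}"

definition hier_domains :: "('n::finite \<Rightarrow> real list) \<Rightarrow> (nat \<Rightarrow> (real^'n) set) \<Rightarrow> bool" where
  "hier_domains K0 \<Omega> \<longleftrightarrow>
     \<Omega> 0 = cbox 0 1 \<and>
     (\<forall>k. \<Omega> (Suc k) \<subseteq> \<Omega> k) \<and>
     (\<forall>k. \<exists>S \<subseteq> cells K0 k. \<Omega> (Suc k) = \<Union>S) \<and>
     (\<exists>N. \<forall>k\<ge>N. \<Omega> k = {})"

definition hmesh :: "('n::finite \<Rightarrow> real list) \<Rightarrow> (nat \<Rightarrow> (real^'n) set) \<Rightarrow> (real^'n) set set" where
  "hmesh K0 \<Omega> = (\<Union>k. {T \<in> cells K0 k. T \<subseteq> \<Omega> k \<and> \<not> T \<subseteq> \<Omega> (Suc k)})"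

definition hbasis :: "('n::finite \<Rightarrow> nat) \<Rightarrow> ('n \<Rightarrow> real list) \<Rightarrow> (nat \<Rightarrow> (real^'n) set)
     \<Rightarrow> (real^'n \<Rightarrow> real) set" where
  "hbasis p K0 \<Omega> =
     (\<Union>k. {\<beta> \<in> bsplines p K0 k. supp \<beta> \<subseteq> \<Omega> k \<and> \<not> supp \<beta> \<subseteq> \<Omega> (Suc k)})"

definition neighbors :: "('n::finite \<Rightarrow> nat) \<Rightarrow> ('n \<Rightarrow> real list) \<Rightarrow> (nat \<Rightarrow> (real^'n) set)
     \<Rightarrow> (real^'n) set \<Rightarrow> (real^'n) set set" where
  "neighbors p K0 \<Omega> T =
     {T' \<in> hmesh K0 \<Omega>. \<exists>\<beta>\<in>hbasis p K0 \<Omega>. T \<subseteq> supp \<beta> \<and> T' \<subseteq> supp \<beta>}"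

definition touching :: "('n::finite \<Rightarrow> real list) \<Rightarrow> (nat \<Rightarrow> (real^'n) set)
     \<Rightarrow> (real^'n) set \<Rightarrow> (real^'n) set set" where
  "touching K0 \<Omega> T = {T' \<in> hmesh K0 \<Omega>. T' \<inter> T \<noteq> {}}"

end

theory Submission
  imports Defs
begin

(*
  Two touching cells of the hierarchical mesh always lie in the support of a common level-0
  B-spline supported in [0,1]^d. If a B-spline of level j covers two cells of finer levels, then
  a B-spline of level j + 1 covers them within its support: in each direction the two knot spans
  overlap, so at most one knot value, of multiplicity at most p, lies strictly between their outer
  ends, while the support of the coarse B-spline contains p + 2 knots; hence a window of p + 2
  consecutive refined knots fits between the two spans and the ends of the coarse support.
  At the last level j at which a covering B-spline supported in the level-j domain exists, that
  B-spline is not supported in the level-(j + 1) domain, hence belongs to the hierarchical basis.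
*)

subsection \<open>Refinement of knot vectors\<close>

definition midpoints :: "real list \<Rightarrow> real list" where
  "midpoints t = map (\<lambda>(a, b). (a + b) / 2) (filter (\<lambda>(a, b). a < b) (zip t (tl t)))"

lemma refine_knots_eq: "refine_knots t = sort (t @ midpoints t)"
  by (simp add: refine_knots_def midpoints_def)

lemma midpoints_Cons_Cons:
  "midpoints (a # b # t) = (if a < b then [(a + b) / 2] else []) @ midpoints (b # t)"
  by (simp add: midpoints_def)

lemma midpointsE:
  assumes "z \<in> set (midpoints t)"
  obtains i where "Suc i < length t" "t ! i < t ! Suc i" "z = (t ! i + t ! Suc i) / 2"
proof -
  obtain a b where ab: "(a, b) \<in> set (zip t (tl t))" "a < b" "z = (a + b) / 2"
    using assms unfolding midpoints_def by auto
  then obtain i where "i < length (tl t)" "a = t ! i" "b = tl t ! i"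
    by (auto simp: set_zip)
  then show thesis
    using ab that[of i] by (auto simp: nth_tl)
qed

lemma midpoint_notin_knots:
  assumes "sorted t" "z \<in> set (midpoints t)"
  shows "z \<notin> set t"
proof
  assume "z \<in> set t"
  then obtain k where k: "k < length t" "t ! k = z"
    by (auto simp: in_set_conv_nth)
  obtain i where i: "Suc i < length t" "t ! i < t ! Suc i" "z = (t ! i + t ! Suc i) / 2"
    using assms(2) by (rule midpointsE)
  have "t ! k \<le> t ! i \<or> t ! Suc i \<le> t ! k"
    using sorted_nth_mono[OF assms(1), of k i] sorted_nth_mono[OF assms(1), of "Suc i" k] i k
    by linarith
  then show False
    using i k by auto
qed

lemma strict_sorted_midpoints:
  "sorted t \<Longrightarrow> sorted_wrt (<) (midpoints t) \<and> (\<forall>z\<in>set (midpoints t). hd t < z)"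
proof (induction t rule: induct_list012)
  case (3 a b t)
  then show ?case
    unfolding midpoints_Cons_Cons by (auto simp: sorted_wrt_append)
qed (simp_all add: midpoints_def)

lemma midpoints_subset_interval:
  assumes "set t \<subseteq> {a..b}"
  shows "set (midpoints t) \<subseteq> {a..b}"
proof
  fix z
  assume "z \<in> set (midpoints t)"
  then obtain i where i: "Suc i < length t" "z = (t ! i + t ! Suc i) / 2"
    by (rule midpointsE)
  then have "t ! i \<in> set t" "t ! Suc i \<in> set t"
    by simp_all
  then have "t ! i \<in> {a..b}" "t ! Suc i \<in> {a..b}"
    using assms by auto
  then show "z \<in> {a..b}"
    using i by auto
qed

lemma set_refine_knots: "set t \<subseteq> set (refine_knots t)"
  by (simp add: refine_knots_eq)

lemma count_list_refine_knots:
  "count_list (refine_knots t) x = count_list t x + count_list (midpoints t) x"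
  by (simp add: refine_knots_eq flip: count_mset)

lemma length_filter_refine_knots:
  "length (filter P t) \<le> length (filter P (refine_knots t))"
  by (metis length_filter_le filter_append length_append le_add1 mset_filter mset_sort
      refine_knots_eq size_mset)

definition admissible_knots :: "nat \<Rightarrow> real list \<Rightarrow> bool" where
  "admissible_knots q t \<longleftrightarrow>
     sorted t \<and> set t \<subseteq> {0..1} \<and> (\<forall>x\<in>{0<..<1}. count_list t x \<le> q)"

lemma admissible_refine_knots:
  assumes "1 \<le> q" "admissible_knots q t"
  shows "admissible_knots q (refine_knots t)"
proof -
  have sorted: "sorted t" and range: "set t \<subseteq> {0..1}"
    and mult: "\<forall>x\<in>{0<..<1}. count_list t x \<le> q"
    using assms(2) by (auto simp: admissible_knots_def)
  have "distinct (midpoints t)"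
    using strict_sorted_midpoints[OF sorted] strict_sorted_iff by blast
  then have mult_mid: "count_list (midpoints t) x \<le> 1" for x
    by (metis count_mset distinct_count_atmost_1 order_refl zero_le_one)
  have "count_list (refine_knots t) x \<le> q" if "x \<in> {0<..<1}" for x
  proof (cases "x \<in> set t")
    case True
    then have "x \<notin> set (midpoints t)"
      using midpoint_notin_knots[OF sorted] by blast
    then show ?thesis
      using mult that by (simp add: count_list_refine_knots)
  next
    case False
    then show ?thesis
      using mult_mid[of x] assms(1) by (simp add: count_list_refine_knots)
  qed
  moreover have "set (refine_knots t) \<subseteq> {0..1}"
    using range midpoints_subset_interval[OF range] by (auto simp: refine_knots_eq)
  ultimately show ?thesis
    by (simp add: admissible_knots_def refine_knots_eq)
qed

lemma open_knot_vector_admissible: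
  "open_knot_vector q t \<Longrightarrow> admissible_knots q t"
  by (simp add: open_knot_vector_def admissible_knots_def)

lemma open_knot_vector_boundary:
  assumes "open_knot_vector q t"
  shows "0 \<in> set t" "1 \<in> set t" "q + 2 \<le> length t"
proof -
  have count: "count_list t 0 = q + 1" "count_list t 1 = q + 1"
    using assms by (auto simp: open_knot_vector_def)
  then show "0 \<in> set t" "1 \<in> set t"
    using count_list_0_iff by force+
  have "sum (count_list t) {0, 1} \<le> sum (count_list t) (set t)"
    by (rule sum_mono2) (use \<open>0 \<in> set t\<close> \<open>1 \<in> set t\<close> in auto)
  also have "\<dots> = length t"
    by (rule sum_count_set) auto
  finally show "q + 2 \<le> length t"
    using count by simp
qed

lemma knots_Suc: "knots K0 (Suc k) i = refine_knots (knots K0 k i)"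
  by (simp add: knots_def)

lemma admissible_knots_level:
  assumes "\<forall>i. 1 \<le> p i" "\<forall>i. open_knot_vector (p i) (K0 i)"
  shows "admissible_knots (p i) (knots K0 k i)"
proof (induction k)
  case 0
  then show ?case
    using assms(2) open_knot_vector_admissible by (simp add: knots_def)
next
  case (Suc k)
  then show ?case
    using assms(1) admissible_refine_knots by (simp add: knots_Suc)
qed

lemma set_knots_mono:
  assumes "j \<le> k"
  shows "set (knots K0 j i) \<subseteq> set (knots K0 k i)"
  using assms
proof (induction k rule: dec_induct)
  case (step k)
  then show ?case
    using set_refine_knots by (force simp: knots_Suc)
qed simp

subsection \<open>Windows of consecutive knots\<close>

lemma sorted_nth_downward_closed_iff:
  assumes "sorted s" "\<And>y z. y \<le> z \<Longrightarrow> P z \<Longrightarrow> P y" "i < length s"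
  shows "P (s ! i) \<longleftrightarrow> i < length (filter P s)"
  using assms(1,3)
proof (induction s arbitrary: i)
  case (Cons x s)
  show ?case
  proof (cases "P x")
    case True
    then show ?thesis
      using Cons by (cases i) auto
  next
    case False
    have "\<not> P y" if "y \<in> set (x # s)" for y
      using that Cons.prems(1) False assms(2) by auto
    then show ?thesis
      using Cons.prems(2) nth_mem[OF Cons.prems(2)] False by auto
  qed
qed simp

lemma length_filter_split:
  "length (filter P xs) = length (filter (\<lambda>x. P x \<and> Q x) xs) + length (filter (\<lambda>x. P x \<and> \<not> Q x) xs)"
  using sum_length_filter_compl[of Q "filter P xs"] by (simp add: filter_filter)

text \<open>Counting the knots below each threshold turns the search for the window into linear
  arithmetic on indices.\<close>

lemma sorted_knot_window:
  fixes s :: "real list"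
  assumes sorted: "sorted s" and "A \<in> set s" "B \<in> set s" "A \<le> u" "u < v" "v \<le> B"
    and between: "length (filter (\<lambda>z. u < z \<and> z < v) s) \<le> q"
    and enough: "q + 2 \<le> length (filter (\<lambda>z. A \<le> z \<and> z \<le> B) s)"
  shows "\<exists>l. l + q + 1 < length s \<and> A \<le> s ! l \<and> s ! l \<le> u
           \<and> v \<le> s ! (l + q + 1) \<and> s ! (l + q + 1) \<le> B"
proof -
  define nA where "nA = length (filter (\<lambda>z. z < A) s)"
  define nu where "nu = length (filter (\<lambda>z. z \<le> u) s)"
  define nv where "nv = length (filter (\<lambda>z. z < v) s)"
  define nB where "nB = length (filter (\<lambda>z. z \<le> B) s)"
  have idx: "s ! i < A \<longleftrightarrow> i < nA" "s ! i \<le> u \<longleftrightarrow> i < nu"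
            "s ! i < v \<longleftrightarrow> i < nv" "s ! i \<le> B \<longleftrightarrow> i < nB" if "i < length s" for i
    unfolding nA_def nu_def nv_def nB_def
    by (rule sorted_nth_downward_closed_iff[OF sorted _ that]; force)+
  obtain mA mB where m: "mA < length s" "s ! mA = A" "mB < length s" "s ! mB = B"
    using \<open>A \<in> set s\<close> \<open>B \<in> set s\<close> by (metis in_set_conv_nth)
  have "nA < nu" "nv < nB"
    using idx[OF m(1)] idx[OF m(3)] m assms(4-6) by force+
  moreover have "nv = nu + length (filter (\<lambda>z. u < z \<and> z < v) s)"
    unfolding nv_def nu_def length_filter_split[of "\<lambda>z. z < v" s "\<lambda>z. z \<le> u"]
    using \<open>u < v\<close> by (auto intro!: arg_cong2[where f="(+)"] arg_cong[where f=length] filter_cong)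
  moreover have "nB = nA + length (filter (\<lambda>z. A \<le> z \<and> z \<le> B) s)"
    unfolding nB_def nA_def length_filter_split[of "\<lambda>z. z \<le> B" s "\<lambda>z. z < A"]
    using assms(4-6) by (auto intro!: arg_cong2[where f="(+)"] arg_cong[where f=length] filter_cong)
  moreover have "nB \<le> length s"
    unfolding nB_def by simp
  ultimately obtain l where l: "nA \<le> l" "l < nu" "nv \<le> l + q + 1" "l + q + 1 < nB"
    "l + q + 1 < length s"
    using between enough by (intro that[of "max nA (nv - (q + 1))"]) auto
  then show ?thesis
    using idx[of l] idx[of "l + q + 1"] by (intro exI[of _ l]) auto
qed

lemma knot_span_cover:
  fixes t :: "real list"
  assumes "sorted t" "A \<in> set t" "B \<in> set t"
    and mult: "\<forall>w. A < w \<and> w < B \<longrightarrow> count_list t w \<le> q"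
    and "A \<le> x" "x < y" "y \<le> B" "A \<le> x'" "x' < y'" "y' \<le> B" "max x x' \<le> min y y'"
    and span: "\<forall>z\<in>set t. \<not> (x < z \<and> z < y)" and span': "\<forall>z\<in>set t. \<not> (x' < z \<and> z < y')"
    and enough: "q + 2 \<le> length (filter (\<lambda>z. A \<le> z \<and> z \<le> B) t)"
  shows "\<exists>l. l + q + 1 < length t \<and> A \<le> t ! l \<and> t ! l \<le> min x x'
           \<and> max y y' \<le> t ! (l + q + 1) \<and> t ! (l + q + 1) \<le> B"
proof -
  define P where "P z \<longleftrightarrow> min x x' < z \<and> z < max y y'" for z
  define w where "w = (if x \<le> x' then y else y')"
  \<comment> \<open>the two overlapping spans leave at most the single knot value w uncovered\<close>
  have only_w: "z = w" if "z \<in> set t" "P z" for z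
    using that(2) span[rule_format, OF that(1)] span'[rule_format, OF that(1)] assms(6,9,11)
    unfolding P_def w_def by (auto simp: min_def max_def split: if_splits)
  have "length (filter P t) \<le> q"
  proof (cases "P w")
    case True
    have "length (filter P t) \<le> length (filter ((=) w) t)"
      using only_w by (induction t) auto
    also have "\<dots> \<le> q"
    proof -
      have "A < w" "w < B"
        using True assms(5,7,8,10) unfolding P_def by linarith+
      then show ?thesis
        using mult by (simp add: count_list_eq_length_filter)
    qed
    finally show ?thesis .
  next
    case False
    then have "filter P t = []"
      using only_w by (auto simp: filter_empty_conv)
    then show ?thesis by simp
  qed
  then show ?thesis
    using sorted_knot_window[OF assms(1-3), of "min x x'" "max y y'" q] assms(5-10) enough
    unfolding P_def by auto
qed

subsection \<open>Supports of tensor-product B-splines\<close>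

lemma bspl_nonneg_and_vanishes_outside:
  assumes "sorted t" "j + q + 1 < length t"
  shows "0 \<le> bspl t q j x \<and> (bspl t q j x \<noteq> 0 \<longrightarrow> t ! j \<le> x \<and> x < t ! (j + q + 1))"
  using assms(2)
proof (induction q arbitrary: j)
  case (Suc q)
  have le: "t ! j \<le> t ! (j + 1)" "t ! j \<le> t ! (j + q + 1)" "t ! (j + 1) \<le> t ! (j + q + 2)"
    using sorted_nth_mono[OF assms(1)] Suc.prems by auto
  have IH: "0 \<le> bspl t q j x \<and> (bspl t q j x \<noteq> 0 \<longrightarrow> t ! j \<le> x)"
           "0 \<le> bspl t q (j + 1) x \<and> (bspl t q (j + 1) x \<noteq> 0 \<longrightarrow> t ! (j + 1) \<le> x \<and> x < t ! (j + q + 2))"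
    using Suc.IH[of j] Suc.IH[of "j + 1"] Suc.prems by (simp_all add: algebra_simps)
  have left: "0 \<le> (x - t ! j) / (t ! (j + q + 1) - t ! j) * bspl t q j x"
    using IH(1) le by (cases "bspl t q j x = 0") auto
  have right: "0 \<le> (t ! (j + q + 2) - x) / (t ! (j + q + 2) - t ! (j + 1)) * bspl t q (j + 1) x"
    using IH(2) le by (cases "bspl t q (j + 1) x = 0") auto
  have "t ! j \<le> x \<and> x < t ! (j + q + 2)" if "bspl t (Suc q) j x \<noteq> 0"
    using that Suc.IH[of j] Suc.prems IH(2) le sorted_nth_mono[OF assms(1), of "j + q + 1" "j + q + 2"]
    by (cases "bspl t q j x = 0") (auto simp: algebra_simps)
  then show ?case
    using left right by simp
qed simp

lemma bspl_pos:
  assumes "sorted t" "j + q + 1 < length t" "t ! j < x" "x < t ! (j + q + 1)" "x \<notin> set t"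
  shows "0 < bspl t q j x"
  using assms(2-4)
proof (induction q arbitrary: j)
  case (Suc q)
  have le: "t ! j \<le> t ! (j + q + 1)" "t ! (j + 1) \<le> t ! (j + q + 1)"
    "t ! (j + q + 1) \<le> t ! (j + q + 2)"
    using sorted_nth_mono[OF assms(1)] Suc.prems(1) by auto
  have nonneg: "0 \<le> bspl t q j x" "0 \<le> bspl t q (j + 1) x"
    using bspl_nonneg_and_vanishes_outside[OF assms(1)] Suc.prems(1) by auto
  have left: "0 \<le> (x - t ! j) / (t ! (j + q + 1) - t ! j) * bspl t q j x"
    using nonneg le Suc.prems by (intro mult_nonneg_nonneg divide_nonneg_nonneg) auto
  have right: "0 \<le> (t ! (j + q + 2) - x) / (t ! (j + q + 2) - t ! (j + 1)) * bspl t q (j + 1) x"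
    using nonneg le Suc.prems by (intro mult_nonneg_nonneg divide_nonneg_nonneg) auto
  \<comment> \<open>x is not a knot, so it lies strictly inside one of the two spans of degree q\<close>
  have "x \<noteq> t ! (j + q + 1)"
    using assms(5) Suc.prems(1) nth_mem[of "j + q + 1" t] by auto
  then consider "x < t ! (j + q + 1)" | "t ! (j + 1) < x" "x < t ! (j + q + 2)"
    using le Suc.prems(3) by fastforce
  then show ?case
  proof cases
    case 1
    then have "0 < bspl t q j x"
      using Suc.IH[of j] Suc.prems by simp
    then show ?thesis
      using 1 Suc.prems right by (simp add: add_pos_nonneg)
  next
    case 2
    then have "0 < bspl t q (j + 1) x"
      using Suc.IH[of "j + 1"] Suc.prems by (simp add: algebra_simps)
    then show ?thesis
      using 2 left by (simp add: add_nonneg_pos)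
  qed
qed simp

definition tensor_bspl :: "('n::finite \<Rightarrow> real list) \<Rightarrow> ('n \<Rightarrow> nat) \<Rightarrow> ('n \<Rightarrow> nat)
     \<Rightarrow> real^'n \<Rightarrow> real" where
  "tensor_bspl t q J x = (\<Prod>i\<in>UNIV. bspl (t i) (q i) (J i) (x $ i))"

lemma mem_bsplines_iff:
  "\<beta> \<in> bsplines p K0 k \<longleftrightarrow>
     (\<exists>J. (\<forall>i. J i + p i + 1 < length (knots K0 k i)) \<and> \<beta> = tensor_bspl (knots K0 k) p J)"
  by (simp add: bsplines_def tensor_bspl_def fun_eq_iff)

lemma supp_tensor_bspl_subset:
  assumes "\<forall>i. sorted (t i)" "\<forall>i. J i + q i + 1 < length (t i)"
  shows "supp (tensor_bspl t q J) \<subseteq> cbox (\<chi> i. t i ! J i) (\<chi> i. t i ! (J i + q i + 1))"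
  unfolding supp_def
proof (rule closure_minimal[OF _ closed_cbox])
  show "{x. tensor_bspl t q J x \<noteq> 0} \<subseteq> cbox (\<chi> i. t i ! J i) (\<chi> i. t i ! (J i + q i + 1))"
    using bspl_nonneg_and_vanishes_outside assms
    by (fastforce simp: tensor_bspl_def mem_box_cart less_imp_le)
qed

lemma exists_near_avoiding_finite:
  fixes lo hi y d :: real
  assumes "lo \<le> y" "y \<le> hi" "lo < hi" "finite F" "0 < d"
  shows "\<exists>x. lo < x \<and> x < hi \<and> x \<notin> F \<and> \<bar>x - y\<bar> < d"
proof -
  have "max lo (y - d) < min hi (y + d)"
    using assms by auto
  then have "infinite ({max lo (y - d)<..<min hi (y + d)} - F)"
    using assms(4) by (simp add: Diff_infinite_finite)
  then obtain x where "x \<in> {max lo (y - d)<..<min hi (y + d)} - F"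
    using infinite_imp_nonempty by blast
  then show ?thesis
    by (intro exI[of _ x]) auto
qed

lemma supp_tensor_bspl:
  fixes t :: "'n::finite \<Rightarrow> real list"
  assumes sorted: "\<forall>i. sorted (t i)" and len: "\<forall>i. J i + q i + 1 < length (t i)"
    and nondeg: "\<forall>i. t i ! J i < t i ! (J i + q i + 1)"
  shows "supp (tensor_bspl t q J) = cbox (\<chi> i. t i ! J i) (\<chi> i. t i ! (J i + q i + 1))"
proof
  show "cbox (\<chi> i. t i ! J i) (\<chi> i. t i ! (J i + q i + 1)) \<subseteq> supp (tensor_bspl t q J)"
  proof
    fix y
    assume "y \<in> cbox (\<chi> i. t i ! J i) (\<chi> i. t i ! (J i + q i + 1))"
    then have y: "\<forall>i. t i ! J i \<le> y $ i \<and> y $ i \<le> t i ! (J i + q i + 1)"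
      by (simp add: mem_box_cart)
    show "y \<in> supp (tensor_bspl t q J)"
      unfolding supp_def closure_approachable
    proof (intro allI impI)
      fix e :: real
      assume "0 < e"
      then have d: "0 < e / CARD('n)"
        by (simp add: finite_UNIV_card_ge_0)
      \<comment> \<open>approximate y by a point none of whose coordinates is a knot\<close>
      obtain f where f: "\<forall>i. t i ! J i < f i \<and> f i < t i ! (J i + q i + 1) \<and> f i \<notin> set (t i)
          \<and> \<bar>f i - y $ i\<bar> < e / CARD('n)"
      proof -
        have "\<forall>i. \<exists>z. t i ! J i < z \<and> z < t i ! (J i + q i + 1) \<and> z \<notin> set (t i)
            \<and> \<bar>z - y $ i\<bar> < e / CARD('n)"
          using exists_near_avoiding_finite[OF _ _ _ _ d] y nondeg by blast
        then show thesis
          using that by metis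
      qed
      have "0 < tensor_bspl t q J (\<chi> i. f i)"
        unfolding tensor_bspl_def using bspl_pos sorted len f by (auto intro: prod_pos)
      moreover have "dist (\<chi> i. f i) y < e"
      proof -
        have "dist (\<chi> i. f i) y \<le> (\<Sum>i\<in>UNIV. \<bar>((\<chi> i. f i) - y) $ i\<bar>)"
          unfolding dist_norm by (rule norm_le_l1_cart)
        also have "\<dots> < (\<Sum>i\<in>(UNIV::'n set). e / CARD('n))"
          by (rule sum_strict_mono) (use f in auto)
        also have "\<dots> = e"
          by simp
        finally show ?thesis .
      qed
      ultimately show "\<exists>x\<in>{x. tensor_bspl t q J x \<noteq> 0}. dist x y < e"
        by (intro bexI[of _ "\<chi> i. f i"]) auto
    qed
  qed
qed (rule supp_tensor_bspl_subset[OF sorted len])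

subsection \<open>Common B-splines of touching cells\<close>

definition knot_free_box :: "('n::finite \<Rightarrow> real list) \<Rightarrow> real^'n \<Rightarrow> real^'n \<Rightarrow> bool" where
  "knot_free_box t a b \<longleftrightarrow> (\<forall>i. a $ i < b $ i \<and> (\<forall>z\<in>set (t i). \<not> (a $ i < z \<and> z < b $ i)))"

lemma cellsE:
  assumes "T \<in> cells K0 k" "\<forall>i. sorted (knots K0 k i)"
  obtains a b where "T = cbox a b" "knot_free_box (knots K0 k) a b"
proof -
  obtain a b where T: "T = cbox a b" and span: "\<forall>i. \<exists>m. m + 1 < length (knots K0 k i) \<and>
      a $ i = knots K0 k i ! m \<and> b $ i = knots K0 k i ! (m + 1) \<and> a $ i < b $ i"
    using assms(1) unfolding cells_def by blast
  have "\<not> (a $ i < z \<and> z < b $ i)" if z: "z \<in> set (knots K0 k i)" for i z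
  proof -
    obtain m where m: "m + 1 < length (knots K0 k i)" "a $ i = knots K0 k i ! m"
      "b $ i = knots K0 k i ! (m + 1)"
      using span by blast
    obtain r where r: "r < length (knots K0 k i)" "z = knots K0 k i ! r"
      using z by (auto simp: in_set_conv_nth)
    have "z \<le> a $ i" if "r \<le> m"
      using sorted_nth_mono[OF assms(2)[rule_format, of i] that] m r by simp
    moreover have "b $ i \<le> z" if "m + 1 \<le> r"
      using sorted_nth_mono[OF assms(2)[rule_format, of i] that] m r by simp
    ultimately show ?thesis
      by linarith
  qed
  moreover have "\<forall>i. a $ i < b $ i"
    using span by blast
  ultimately show thesis
    using that[OF T] by (simp add: knot_free_box_def)
qed

lemma knot_free_box_coarser:
  assumes "knot_free_box (knots K0 k) a b" "j \<le> k"
  shows "knot_free_box (knots K0 j) a b"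
  using assms(1) set_knots_mono[OF assms(2)] unfolding knot_free_box_def by (meson subsetD)

lemma tensor_bspl_cover:
  fixes t :: "'n::finite \<Rightarrow> real list" and A B :: "real^'n"
  assumes sorted: "\<forall>i. sorted (t i)"
    and mult: "\<forall>i w. A $ i < w \<and> w < B $ i \<longrightarrow> count_list (t i) w \<le> q i"
    and corners: "\<forall>i. A $ i \<in> set (t i)" "\<forall>i. B $ i \<in> set (t i)"
    and enough: "\<forall>i. q i + 2 \<le> length (filter (\<lambda>z. A $ i \<le> z \<and> z \<le> B $ i) (t i))"
    and boxes: "knot_free_box t a b" "knot_free_box t a' b'"
    and meet: "cbox a b \<inter> cbox a' b' \<noteq> {}"
    and inside: "cbox a b \<subseteq> cbox A B" "cbox a' b' \<subseteq> cbox A B"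
  obtains J where "\<forall>i. J i + q i + 1 < length (t i)"
    "cbox a b \<subseteq> supp (tensor_bspl t q J)" "cbox a' b' \<subseteq> supp (tensor_bspl t q J)"
    "supp (tensor_bspl t q J) \<subseteq> cbox A B"
proof -
  have nondeg: "\<forall>i. a $ i < b $ i" "\<forall>i. a' $ i < b' $ i"
    using boxes by (auto simp: knot_free_box_def)
  have within: "\<forall>i. A $ i \<le> a $ i \<and> b $ i \<le> B $ i" "\<forall>i. A $ i \<le> a' $ i \<and> b' $ i \<le> B $ i"
    using inside nondeg by (auto simp: subset_interval_cart less_imp_le)
  have overlap: "\<forall>i. max (a $ i) (a' $ i) \<le> min (b $ i) (b' $ i)"
    using meet by (auto simp: disjoint_interval_cart not_less)
  have windows: "\<forall>i. \<exists>l. l + q i + 1 < length (t i) \<and> A $ i \<le> t i ! l \<and> t i ! l \<le> min (a $ i) (a' $ i)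
      \<and> max (b $ i) (b' $ i) \<le> t i ! (l + q i + 1) \<and> t i ! (l + q i + 1) \<le> B $ i"
  proof
    fix i
    show "\<exists>l. l + q i + 1 < length (t i) \<and> A $ i \<le> t i ! l \<and> t i ! l \<le> min (a $ i) (a' $ i)
      \<and> max (b $ i) (b' $ i) \<le> t i ! (l + q i + 1) \<and> t i ! (l + q i + 1) \<le> B $ i"
      using boxes within nondeg overlap
      by (intro knot_span_cover[OF sorted[rule_format] corners(1,2)[rule_format] _ _ _ _ _ _ _ _ _ _
            enough[rule_format]]) (auto simp: mult knot_free_box_def)
  qed
  obtain J where J: "\<forall>i. J i + q i + 1 < length (t i) \<and> A $ i \<le> t i ! J i
      \<and> t i ! J i \<le> min (a $ i) (a' $ i) \<and> max (b $ i) (b' $ i) \<le> t i ! (J i + q i + 1)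
      \<and> t i ! (J i + q i + 1) \<le> B $ i"
    using choice[OF windows] by blast
  have len: "\<forall>i. J i + q i + 1 < length (t i)"
    using J by blast
  have "t i ! J i < t i ! (J i + q i + 1)" for i
  proof -
    have "t i ! J i \<le> a $ i" "b $ i \<le> t i ! (J i + q i + 1)"
      using J by auto
    then show ?thesis
      using nondeg(1) by (meson le_less_trans less_le_trans)
  qed
  then have "supp (tensor_bspl t q J) = cbox (\<chi> i. t i ! J i) (\<chi> i. t i ! (J i + q i + 1))"
    using supp_tensor_bspl[OF sorted len] by blast
  then show thesis
    using that[of J] J by (auto simp: subset_interval_cart)
qed

context
  fixes p :: "'n::finite \<Rightarrow> nat" and K0 :: "'n \<Rightarrow> real list"
  assumes degree_pos: "\<forall>i. 1 \<le> p i" and open_knots: "\<forall>i. open_knot_vector (p i) (K0 i)"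
begin

lemma sorted_knots: "\<forall>i. sorted (knots K0 k i)"
  using admissible_knots_level[OF degree_pos open_knots] by (simp add: admissible_knots_def)

lemma bspline_cover_cells:
  assumes cells: "T \<in> cells K0 k" "T' \<in> cells K0 k'" and "j \<le> k" "j \<le> k'" "T \<inter> T' \<noteq> {}"
    and corners: "\<forall>i. A $ i \<in> set (knots K0 j i)" "\<forall>i. B $ i \<in> set (knots K0 j i)"
    and enough: "\<forall>i. p i + 2 \<le> length (filter (\<lambda>z. A $ i \<le> z \<and> z \<le> B $ i) (knots K0 j i))"
    and inside: "T \<subseteq> cbox A B" "T' \<subseteq> cbox A B"
  shows "\<exists>\<beta>\<in>bsplines p K0 j. T \<subseteq> supp \<beta> \<and> T' \<subseteq> supp \<beta> \<and> supp \<beta> \<subseteq> cbox A B"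
proof -
  obtain a b where T: "T = cbox a b" "knot_free_box (knots K0 k) a b"
    using cellsE[OF cells(1) sorted_knots] .
  obtain a' b' where T': "T' = cbox a' b'" "knot_free_box (knots K0 k') a' b'"
    using cellsE[OF cells(2) sorted_knots] .
  have mult: "\<forall>i w. A $ i < w \<and> w < B $ i \<longrightarrow> count_list (knots K0 j i) w \<le> p i"
  proof (intro allI impI)
    fix i w
    assume "A $ i < w \<and> w < B $ i"
    moreover have admissible: "admissible_knots (p i) (knots K0 j i)"
      using admissible_knots_level[OF degree_pos open_knots] .
    moreover have "0 \<le> A $ i" "B $ i \<le> 1"
      using corners admissible by (auto simp: admissible_knots_def)
    ultimately show "count_list (knots K0 j i) w \<le> p i"
      by (auto simp: admissible_knots_def)
  qed
  obtain J where "\<forall>i. J i + p i + 1 < length (knots K0 j i)"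
      "T \<subseteq> supp (tensor_bspl (knots K0 j) p J)" "T' \<subseteq> supp (tensor_bspl (knots K0 j) p J)"
      "supp (tensor_bspl (knots K0 j) p J) \<subseteq> cbox A B"
    using tensor_bspl_cover[OF sorted_knots mult corners enough
        knot_free_box_coarser[OF T(2) assms(3)] knot_free_box_coarser[OF T'(2) assms(4)]]
      assms(5) inside unfolding T(1) T'(1) by blast
  then show ?thesis
    by (intro bexI[of _ "tensor_bspl (knots K0 j) p J"]) (auto simp: mem_bsplines_iff)
qed

lemma bspline_cover_cells_level0:
  assumes "T \<in> cells K0 k" "T' \<in> cells K0 k'" "T \<inter> T' \<noteq> {}"
    and "T \<subseteq> cbox 0 1" "T' \<subseteq> cbox 0 1"
  shows "\<exists>\<beta>\<in>bsplines p K0 0. T \<subseteq> supp \<beta> \<and> T' \<subseteq> supp \<beta> \<and> supp \<beta> \<subseteq> cbox 0 1"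
proof (rule bspline_cover_cells[OF assms(1-2) _ _ assms(3) _ _ _ assms(4,5)])
  have "filter (\<lambda>z. 0 \<le> z \<and> z \<le> 1) (K0 i) = K0 i" for i
    using open_knots[rule_format, of i] by (intro filter_True) (auto simp: open_knot_vector_def)
  then show "\<forall>i. p i + 2 \<le> length (filter (\<lambda>z. (0::real^'n) $ i \<le> z \<and> z \<le> (1::real^'n) $ i)
      (knots K0 0 i))"
    using open_knot_vector_boundary(3) open_knots by (simp add: knots_def)
  show "\<forall>i. (0::real^'n) $ i \<in> set (knots K0 0 i)" "\<forall>i. (1::real^'n) $ i \<in> set (knots K0 0 i)"
    using open_knot_vector_boundary(1,2)[OF open_knots[rule_format]] by (simp_all add: knots_def)
qed simp_all

lemma bspline_cover_cells_refine:
  assumes "\<beta> \<in> bsplines p K0 j" "T \<in> cells K0 k" "T' \<in> cells K0 k'" "j < k" "j < k'"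
    and "T \<inter> T' \<noteq> {}" "T \<subseteq> supp \<beta>" "T' \<subseteq> supp \<beta>"
  shows "\<exists>\<beta>'\<in>bsplines p K0 (Suc j). T \<subseteq> supp \<beta>' \<and> T' \<subseteq> supp \<beta>' \<and> supp \<beta>' \<subseteq> supp \<beta>"
proof -
  define t where "t = knots K0 j"
  obtain J where J: "\<forall>i. J i + p i + 1 < length (t i)" and \<beta>: "\<beta> = tensor_bspl t p J"
    using assms(1) unfolding mem_bsplines_iff t_def by blast
  define lo hi :: "real^'n" where "lo = (\<chi> i. t i ! J i)" and "hi = (\<chi> i. t i ! (J i + p i + 1))"
  have sorted: "\<forall>i. sorted (t i)"
    unfolding t_def by (rule sorted_knots)
  obtain a b where T: "T = cbox a b" "knot_free_box (knots K0 k) a b"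
    using cellsE[OF assms(2) sorted_knots] .
  have "supp \<beta> \<subseteq> cbox lo hi"
    unfolding \<beta> lo_def hi_def by (rule supp_tensor_bspl_subset[OF sorted J])
  then have "cbox a b \<subseteq> cbox lo hi"
    using T(1) assms(7) by blast
  moreover have "\<forall>i. a $ i < b $ i"
    using T(2) by (simp add: knot_free_box_def)
  ultimately have "lo $ i \<le> a $ i" "a $ i < b $ i" "b $ i \<le> hi $ i" for i
    by (auto simp: subset_interval_cart less_imp_le)
  then have "lo $ i < hi $ i" for i
    by (meson le_less_trans less_le_trans)
  then have "\<forall>i. t i ! J i < t i ! (J i + p i + 1)"
    by (simp add: lo_def hi_def)
  then have supp: "supp \<beta> = cbox lo hi"
    unfolding \<beta> lo_def hi_def by (rule supp_tensor_bspl[OF sorted J])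
  \<comment> \<open>the p + 2 knots of \<beta> lie in its support and survive refinement\<close>
  have "p i + 2 \<le> length (filter (\<lambda>z. lo $ i \<le> z \<and> z \<le> hi $ i) (knots K0 (Suc j) i))" for i
  proof -
    have "{J i..J i + p i + 1} \<subseteq> {r. r < length (t i) \<and> lo $ i \<le> t i ! r \<and> t i ! r \<le> hi $ i}"
    proof
      fix r
      assume r: "r \<in> {J i..J i + p i + 1}"
      then have "r < length (t i)"
        using J[rule_format, of i] by simp
      then show "r \<in> {r. r < length (t i) \<and> lo $ i \<le> t i ! r \<and> t i ! r \<le> hi $ i}"
        using r J[rule_format, of i] sorted_nth_mono[OF sorted[rule_format, of i]]
        unfolding lo_def hi_def by simp
    qed
    then have "card {J i..J i + p i + 1}
        \<le> card {r. r < length (t i) \<and> lo $ i \<le> t i ! r \<and> t i ! r \<le> hi $ i}"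
      by (intro card_mono) auto
    then have "p i + 2 \<le> length (filter (\<lambda>z. lo $ i \<le> z \<and> z \<le> hi $ i) (t i))"
      by (simp add: length_filter_conv_card)
    then show ?thesis
      using length_filter_refine_knots[of _ "t i"] by (simp add: knots_Suc t_def le_trans)
  qed
  moreover have "lo $ i \<in> set (knots K0 (Suc j) i)" "hi $ i \<in> set (knots K0 (Suc j) i)" for i
    using J[rule_format, of i] set_knots_mono[of j "Suc j" K0 i]
    unfolding lo_def hi_def t_def by auto
  ultimately show ?thesis
    using bspline_cover_cells[OF assms(2,3) _ _ assms(6)] assms(4,5,7,8) unfolding supp by simp
qed

end

lemma ex_last_before_failure:
  fixes P :: "nat \<Rightarrow> bool"
  assumes "P 0" "\<not> P n"
  shows "\<exists>j. P j \<and> \<not> P (Suc j)"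
  using assms(2) by (induction n) (use assms(1) in auto)

lemma hier_domains_decseq: "hier_domains K0 \<Omega> \<Longrightarrow> decseq \<Omega>"
  by (simp add: hier_domains_def decseq_Suc_iff)

lemma decseq_not_subset_level:
  assumes "decseq \<Omega>" "\<not> T \<subseteq> \<Omega> (Suc k)" "T \<subseteq> \<Omega> (Suc j)"
  shows "j < k"
proof (rule ccontr)
  assume "\<not> j < k"
  then show False
    using assms decseqD[OF assms(1), of "Suc k" "Suc j"] by auto
qed

lemma hmesh_common_hbasis:
  assumes degree_pos: "\<forall>i. 1 \<le> p i" and open_knots: "\<forall>i. open_knot_vector (p i) (K0 i)"
    and hier: "hier_domains K0 \<Omega>"
    and "T \<in> hmesh K0 \<Omega>" "T' \<in> hmesh K0 \<Omega>" "T \<inter> T' \<noteq> {}"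
  shows "\<exists>\<beta>\<in>hbasis p K0 \<Omega>. T \<subseteq> supp \<beta> \<and> T' \<subseteq> supp \<beta>"
proof -
  obtain k where T: "T \<in> cells K0 k" "T \<subseteq> \<Omega> k" "\<not> T \<subseteq> \<Omega> (Suc k)"
    using assms(4) unfolding hmesh_def by blast
  obtain k' where T': "T' \<in> cells K0 k'" "T' \<subseteq> \<Omega> k'" "\<not> T' \<subseteq> \<Omega> (Suc k')"
    using assms(5) unfolding hmesh_def by blast
  define Q where "Q j \<longleftrightarrow> (\<exists>\<beta>\<in>bsplines p K0 j. T \<subseteq> supp \<beta> \<and> T' \<subseteq> supp \<beta> \<and> supp \<beta> \<subseteq> \<Omega> j)"
    for j
  have decseq: "decseq \<Omega>"
    using hier by (rule hier_domains_decseq)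
  have "\<Omega> 0 = cbox 0 1"
    using hier by (simp add: hier_domains_def)
  then have "T \<subseteq> cbox 0 1" "T' \<subseteq> cbox 0 1"
    using T(2) T'(2) decseqD[OF decseq, of 0 k] decseqD[OF decseq, of 0 k'] by auto
  then have "Q 0"
    using bspline_cover_cells_level0[OF degree_pos open_knots T(1) T'(1) assms(6)] \<open>\<Omega> 0 = cbox 0 1\<close>
    unfolding Q_def by simp
  moreover obtain N where "\<Omega> N = {}"
    using hier unfolding hier_domains_def by blast
  then have "\<not> Q N"
    using assms(6) unfolding Q_def by blast
  ultimately obtain j where "Q j" and not_Q: "\<not> Q (Suc j)"
    using ex_last_before_failure[of Q N] by blast
  then obtain \<beta> where \<beta>: "\<beta> \<in> bsplines p K0 j" "T \<subseteq> supp \<beta>" "T' \<subseteq> supp \<beta>" "supp \<beta> \<subseteq> \<Omega> j"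
    unfolding Q_def by blast
  have "\<not> supp \<beta> \<subseteq> \<Omega> (Suc j)"
  proof
    assume finer: "supp \<beta> \<subseteq> \<Omega> (Suc j)"
    have "j < k" "j < k'"
      using decseq_not_subset_level[OF decseq] T(3) T'(3) \<beta>(2,3) finer by blast+
    then have "Q (Suc j)"
      using bspline_cover_cells_refine[OF degree_pos open_knots \<beta>(1) T(1) T'(1) _ _ assms(6) \<beta>(2,3)]
        finer unfolding Q_def by blast
    then show False
      using not_Q by blast
  qed
  then show ?thesis
    using \<beta> unfolding hbasis_def by blast
qed

theorem lemma5p3:
  fixes p :: "'n::finite \<Rightarrow> nat"
    and K0 :: "'n \<Rightarrow> real list"
    and \<Omega> :: "nat \<Rightarrow> (real^'n) set"
    and T :: "(real^'n) set"
  assumes "CARD('n) \<ge> 2"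
    and "\<forall>i. p i \<ge> 1"
    and "\<forall>i. open_knot_vector (p i) (K0 i)"
    and "hier_domains K0 \<Omega>"
    and "T \<in> hmesh K0 \<Omega>"
  shows "touching K0 \<Omega> T \<subseteq> neighbors p K0 \<Omega> T"
  using hmesh_common_hbasis[OF assms(2-5)] unfolding touching_def neighbors_def by blast

end
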